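(* Let $A\in\mathbb{R}^{n\times n}$, $B\in\mathbb{R}^{n\times m}$, $N\geq1$ an integer, $\Omega=\{x\in\mathbb{R}^n: Hx\leq h\}$ with $H\in\mathbb{R}^{n_h\times n}$, $X=\{y\in\mathbb{R}^n: Fy\leq f\}$ with $F\in\mathbb{R}^{n_f\times n}$, and $U=\{v\in\mathbb{R}^m: Gv\leq g\}$ with $G\in\mathbb{R}^{n_g\times m}$. Suppose $0\in\Omega$, $0\in X$, $0\in U$. For $k\geq1$ let $Q_k^x(\Omega,U,X)$ be the set of $x\in X$ for which there exist inputs $w_0,\dots,w_{k-1}\in U$ such that the trajectory $x_0=x$, $x_{j+1}=Ax_j+Bw_j$ satisfies $x_j\in X$ for all $j=1,\dots,k$ and $x_k\in\Omega$. Let $\bar{Q}^x_N(\Omega,U,X)=\mathrm{co}\big(\bigcup_{k=1}^N Q^x_k(\Omega,U,X)\big)$. Set $\bar n=n+Nm$ and $$\bar G=\begin{bmatrix} HA^N & HB & HAB & \cdots & HA^{N-1}B\\ 0 & G & 0 & \cdots & 0\\ 0 & 0 & G & \cdots & 0\\ \vdots & & & \ddots & \vdots\\ 0 & 0 & 0 & \cdots & G\\ FA^N & FB & FAB & \cdots & FA^{N-1}B\\ FA^{N-1} & 0 & FB & \cdots & FA^{N-2}B\\ \vdots & & & & \vdots\\ FA & 0 & 0 & \cdots & FB\\ F & 0 & 0 & \cdots & 0 \end{bmatrix},\qquad \bar g=\begin{bmatrix}h\\ g\\ \vdots\\ g\\ f\\ \vdots\\ f\end{bmatrix},\qquad \bar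 H=\begin{bmatrix}H & 0&\cdots&0\end{bmatrix}\in\mathbb{R}^{n_h\times\bar n}.$$ Here the columns of $\bar G$ are split into blocks of widths $n,m,\dots,m$ (one state block followed by $N$ input blocks indexed $i=1,\dots,N$); the $G$-rows consist of $N$ block rows, the $i$-th having $G$ in input block $i$; the $F$-rows consist of $N+1$ block rows, namely for $j=N,N-1,\dots,1$ a block row with $FA^j$ in the state block and, in input block $i$, $FA^{i-1-(N-j)}B$ if $i\geq N-j+1$ and $0$ otherwise, followed by the block row $[F\ 0\ \cdots\ 0]$. Correspondingly $\bar g$ consists of $h$, then $g$ repeated $N$ times, then $f$ repeated $N+1$ times, and $n_{\bar g}=n_h+Nn_g+(N+1)n_f$ is the number of rows of $\bar G$. If there exist a nonnegative (entrywise) matrix $T\in\mathbb{R}^{n_{\bar g}\times n_h}$ and $M\in\mathbb{R}^{\bar n\times\bar n}$ such that $$T\bar H=\bar G M,\qquad Th\leq\bar g,\qquad \begin{bmatrix}I&0&\cdots&0\end{bmatrix}=\begin{bmatrix}I&0&\cdots&0\end{bmatrix}M$$ (with $\begin{bmatrix}I&0&\cdots&0\end{bmatrix}\in\mathbb{R}^{n\times\bar n}$), then $\bar{Q}^x_N(\Omega,U,X)$ is a control invariant set for $x^+=Ax+Bu$ with input set $U$, and it is contained in $X$.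
   Context: A set $C\subseteq\mathbb{R}^n$ is control invariant for $x^+=Ax+Bu$ with input constraint $u\in U$ if for every $x\in C$ there exists $u\in U$ with $Ax+Bu\in C$. Vector inequalities are componentwise; $\mathrm{co}$ denotes convex hull. *)

theory Defs
  imports "HOL-Analysis.Analysis"
begin

primrec mpow :: "real^'n^'n \<Rightarrow> nat \<Rightarrow> real^'n^'n" where
  "mpow A 0 = mat 1"
| "mpow A (Suc k) = A ** mpow A k"

definition control_invariant ::
  "real^'n^'n \<Rightarrow> real^'m^'n \<Rightarrow> (real^'m) set \<Rightarrow> (real^'n) set \<Rightarrow> bool" where
  "control_invariant A B U C \<longleftrightarrow> (\<forall>x\<in>C. \<exists>u\<in>U. A *v x + B *v u \<in> C)"

primrec traj :: "real^'n^'n \<Rightarrow> real^'m^'n \<Rightarrow> real^'n \<Rightarrow> (nat \<Rightarrow> real^'m) \<Rightarrow> nat \<Rightarrow> real^'n" where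
  "traj A B x w 0 = x"
| "traj A B x w (Suc j) = A *v traj A B x w j + B *v w j"

definition Qk ::
  "real^'n^'n \<Rightarrow> real^'m^'n \<Rightarrow> (real^'n) set \<Rightarrow> (real^'m) set \<Rightarrow> (real^'n) set \<Rightarrow> nat \<Rightarrow> (real^'n) set" where
  "Qk A B Omega U X k = {x \<in> X. \<exists>w. (\<forall>j<k. w j \<in> U) \<and> (\<forall>j\<in>{1..k}. traj A B x w j \<in> X)
                                      \<and> traj A B x w k \<in> Omega}"

definition Qbar ::
  "real^'n^'n \<Rightarrow> real^'m^'n \<Rightarrow> (real^'n) set \<Rightarrow> (real^'m) set \<Rightarrow> (real^'n) set \<Rightarrow> nat \<Rightarrow> (real^'n) set" where
  "Qbar A B Omega U X N = convex hull (\<Union>k\<in>{1..N}. Qk A B Omega U X k)"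

(* Column indices of the lifted space R^{n + N m}:
   SC c = state coordinate c; IC i a = coordinate a of input block i+1 (0 <= i < N). *)
datatype ('n, 'm) cidx = SC 'n | IC nat 'm

definition Cols :: "nat \<Rightarrow> ('n, 'm) cidx set" where
  "Cols N = range SC \<union> {IC i a | i a. i < N}"

(* Row indices of Gbar: HR r = H-row r; GR i r = row r of the G-block row for input block i+1 (i < N);
   FR j r = row r of the F-block row whose state block is F A^j (0 <= j <= N). *)
datatype ('h, 'g, 'f) ridx = HR 'h | GR nat 'g | FR nat 'f

definition Rows :: "nat \<Rightarrow> ('h, 'g, 'f) ridx set" where
  "Rows N = range HR \<union> {GR i r | i r. i < N} \<union> {FR j r | j r. j \<le> N}"

definition Gbar ::
  "nat \<Rightarrow> real^'n^'n \<Rightarrow> real^'m^'n \<Rightarrow> real^'n^'h \<Rightarrow> real^'n^'f \<Rightarrow> real^'m^'g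
   \<Rightarrow> ('h, 'g, 'f) ridx \<Rightarrow> ('n, 'm) cidx \<Rightarrow> real" where
  "Gbar N A B H F G \<rho> \<kappa> =
     (case \<rho> of
        HR r \<Rightarrow> (case \<kappa> of SC c \<Rightarrow> (H ** mpow A N) $ r $ c
                           | IC i a \<Rightarrow> (H ** mpow A i ** B) $ r $ a)
      | GR i r \<Rightarrow> (case \<kappa> of SC c \<Rightarrow> 0
                             | IC i' a \<Rightarrow> (if i' = i then G $ r $ a else 0))
      | FR j r \<Rightarrow> (case \<kappa> of SC c \<Rightarrow> (F ** mpow A j) $ r $ c
                             | IC i a \<Rightarrow> (if N - j \<le> i then (F ** mpow A (i - (N - j)) ** B) $ r $ a
                                           else 0)))"

definition gbar ::
  "real^'h \<Rightarrow> real^'g \<Rightarrow> real^'f \<Rightarrow> ('h, 'g, 'f) ridx \<Rightarrow> real" where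
  "gbar h g f \<rho> = (case \<rho> of HR r \<Rightarrow> h $ r | GR i r \<Rightarrow> g $ r | FR j r \<Rightarrow> f $ r)"

definition Hbar :: "real^'n^'h \<Rightarrow> 'h \<Rightarrow> ('n, 'm) cidx \<Rightarrow> real" where
  "Hbar H r \<kappa> = (case \<kappa> of SC c \<Rightarrow> H $ r $ c | IC i a \<Rightarrow> 0)"

definition Ibar :: "'n \<Rightarrow> ('n, 'm) cidx \<Rightarrow> real" where
  "Ibar c \<kappa> = (if \<kappa> = SC c then 1 else 0)"

end

theory Submission
  imports Defs
begin

(* For x in Omega the lifted vector y = M (x, 0, ..., 0) has state part x, because
   [I 0 ... 0] = [I 0 ... 0] M, and Gbar y = T Hbar (x, 0, ..., 0) = T H x <= T h <= gbar.
   Read row block by row block, Gbar y <= gbar says that the inputs stored in y keep the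
   trajectory from x in X and steer it into Omega in N steps; hence Omega is contained in Q_N.
   Consequently the union of Q_1, ..., Q_N is control invariant: one step moves Q_(k+1) into Q_k
   and Q_1 into Omega, which lies in Q_N. Linear dynamics and a convex U carry control
   invariance over to the convex hull, and the hull stays inside the convex set X. *)

definition hpolyhedron :: "real^'a^'b \<Rightarrow> real^'b \<Rightarrow> (real^'a) set" where
  "hpolyhedron G g = {v. \<forall>i. (G *v v) $ i \<le> g $ i}"

lemma convex_hpolyhedron: "convex (hpolyhedron G g)"
proof -
  have "hpolyhedron G g = (\<Inter>i. {v. G $ i \<bullet> v \<le> g $ i})"
    by (auto simp: hpolyhedron_def matrix_vector_mul_component)
  then show ?thesis by (simp add: convex_INT convex_halfspace_le)
qed

lemma control_invariant_convex_hull: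
  assumes "control_invariant A B U S" and "convex U"
  shows "control_invariant A B U (convex hull S)"
proof -
  define D where "D = {p. snd p \<in> U \<and> A *v fst p + B *v snd p \<in> convex hull S}"
  have "convex D"
  proof (rule convexI)
    fix p q and a b :: real
    assume "p \<in> D" "q \<in> D" "0 \<le> a" "0 \<le> b" "a + b = 1"
    moreover have "A *v fst (a *\<^sub>R p + b *\<^sub>R q) + B *v snd (a *\<^sub>R p + b *\<^sub>R q)
        = a *\<^sub>R (A *v fst p + B *v snd p) + b *\<^sub>R (A *v fst q + B *v snd q)"
      by (simp add: algebra_simps)
    ultimately show "a *\<^sub>R p + b *\<^sub>R q \<in> D"
      unfolding D_def using convexD[OF \<open>convex U\<close>] convexD[OF convex_convex_hull] by auto
  qed
  moreover have "S \<subseteq> fst ` D"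
  proof
    fix x assume "x \<in> S"
    then obtain u where "u \<in> U" "A *v x + B *v u \<in> S"
      using assms(1) unfolding control_invariant_def by blast
    then have "(x, u) \<in> D" unfolding D_def by (simp add: hull_inc)
    then show "x \<in> fst ` D" by force
  qed
  ultimately have "convex hull S \<subseteq> fst ` D"
    by (simp add: hull_minimal convex_linear_image linear_fst)
  then show ?thesis
    by (force simp: control_invariant_def D_def)
qed

lemma traj_Suc_shift:
  "traj A B (A *v x + B *v w 0) (\<lambda>j. w (Suc j)) j = traj A B x w (Suc j)"
  by (induction j) auto

lemma Qk_Suc_successor:
  assumes "x \<in> Qk A B Omega U X (Suc k)"
  shows "\<exists>u\<in>U. A *v x + B *v u \<in> Qk A B Omega U X k"
proof -
  obtain w where w: "\<forall>j<Suc k. w j \<in> U" "\<forall>j\<in>{1..Suc k}. traj A B x w j \<in> X"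
      "traj A B x w (Suc k) \<in> Omega"
    using assms unfolding Qk_def by blast
  have "A *v x + B *v w 0 \<in> X" using bspec[OF w(2), of 1] by simp
  then have "A *v x + B *v w 0 \<in> Qk A B Omega U X k"
    unfolding Qk_def using w
    by (auto simp: traj_Suc_shift simp del: traj.simps intro!: exI[of _ "\<lambda>j. w (Suc j)"])
  moreover have "w 0 \<in> U" using w(1) by simp
  ultimately show ?thesis by blast
qed

lemma control_invariant_Union_Qk:
  assumes "Omega \<subseteq> Qk A B Omega U X N"
  shows "control_invariant A B U (\<Union>k\<in>{1..N}. Qk A B Omega U X k)"
  unfolding control_invariant_def
proof
  fix x assume "x \<in> (\<Union>k\<in>{1..N}. Qk A B Omega U X k)"
  then obtain k where k: "k \<in> {1..N}" "x \<in> Qk A B Omega U X (Suc (k - 1))" by auto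
  then obtain u where u: "u \<in> U" "A *v x + B *v u \<in> Qk A B Omega U X (k - 1)"
    using Qk_Suc_successor by blast
  have "Qk A B Omega U X 0 \<subseteq> Qk A B Omega U X N"
    using assms by (auto simp: Qk_def)
  then have "A *v x + B *v u \<in> (\<Union>k\<in>{1..N}. Qk A B Omega U X k)"
    using k(1) u(2) by (cases "k = 1") force+
  with u(1) show "\<exists>u\<in>U. A *v x + B *v u \<in> (\<Union>k\<in>{1..N}. Qk A B Omega U X k)" by blast
qed

lemma Qbar_subset:
  assumes "convex X"
  shows "Qbar A B Omega U X N \<subseteq> X"
  unfolding Qbar_def by (rule hull_minimal) (auto simp: Qk_def assms)

lemma traj_closed_form:
  "traj A B x w j = mpow A j *v x + (\<Sum>l<j. mpow A (j - Suc l) *v (B *v w l))"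
proof (induction j)
  case (Suc j)
  have "Suc j - Suc l = Suc (j - Suc l)" if "l < j" for l
    using that by simp
  then have "A *v (\<Sum>l<j. mpow A (j - Suc l) *v (B *v w l))
      = (\<Sum>l<j. mpow A (Suc j - Suc l) *v (B *v w l))"
    by (simp add: linear_sum[OF matrix_vector_mul_linear] matrix_vector_mul_assoc matrix_mul_assoc)
  then show ?case
    using Suc by (simp add: matrix_vector_right_distrib matrix_vector_mul_assoc)
qed simp

lemma finite_Cols: "finite (Cols N :: ('n::finite, 'm::finite) cidx set)"
  and sum_Cols: "sum \<phi> (Cols N :: ('n::finite, 'm::finite) cidx set)
    = (\<Sum>c\<in>UNIV. \<phi> (SC c)) + (\<Sum>i<N. \<Sum>a\<in>UNIV. \<phi> (IC i a))"
proof -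
  have Cols_eq: "(Cols N :: ('n, 'm) cidx set) = range SC \<union> (\<lambda>(i, a). IC i a) ` ({..<N} \<times> UNIV)"
    by (auto simp: Cols_def)
  show "finite (Cols N :: ('n, 'm) cidx set)" unfolding Cols_eq by auto
  have "sum \<phi> (Cols N) = sum \<phi> (range SC) + sum \<phi> ((\<lambda>(i, a). IC i a) ` ({..<N} \<times> UNIV))"
    unfolding Cols_eq by (rule sum.union_disjoint) auto
  also have "\<dots> = (\<Sum>c\<in>UNIV. \<phi> (SC c)) + (\<Sum>(i, a)\<in>{..<N} \<times> UNIV. \<phi> (IC i a))"
    by (simp add: sum.reindex inj_on_def case_prod_unfold)
  finally show "sum \<phi> (Cols N) = (\<Sum>c\<in>UNIV. \<phi> (SC c)) + (\<Sum>i<N. \<Sum>a\<in>UNIV. \<phi> (IC i a))"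
    by (simp add: sum.cartesian_product)
qed

lemma SC_in_Cols [simp]: "SC c \<in> Cols N"
  by (simp add: Cols_def)

definition state_part :: "(('n::finite, 'm) cidx \<Rightarrow> real) \<Rightarrow> real^'n" where
  "state_part y = (\<chi> c. y (SC c))"

definition input_part :: "(('n, 'm::finite) cidx \<Rightarrow> real) \<Rightarrow> nat \<Rightarrow> real^'m" where
  "input_part y i = (\<chi> a. y (IC i a))"

lemma sum_Cols_block_row:
  fixes P :: "real^'n::finite^'r" and Q :: "nat \<Rightarrow> real^'m::finite^'r"
  shows "(\<Sum>\<kappa>\<in>Cols N. (case \<kappa> of SC c \<Rightarrow> P $ r $ c | IC i a \<Rightarrow> Q i $ r $ a) * y \<kappa>)
    = (P *v state_part y + (\<Sum>i<N. Q i *v input_part y i)) $ r"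
  by (simp add: sum_Cols matrix_vector_mult_def state_part_def input_part_def sum_component)

(* Input block i multiplies A^i B in the H-rows of Gbar, so it is the input applied at
   time N - 1 - i. *)
definition input_seq :: "nat \<Rightarrow> (('n, 'm::finite) cidx \<Rightarrow> real) \<Rightarrow> nat \<Rightarrow> real^'m" where
  "input_seq N y l = input_part y (N - Suc l)"

lemma traj_input_seq:
  assumes "j \<le> N"
  shows "traj A B (state_part y) (input_seq N y) j = mpow A j *v state_part y
    + (\<Sum>i<N. if N - j \<le> i then mpow A (i - (N - j)) *v (B *v input_part y i) else 0)"
proof -
  let ?v = "\<lambda>i. mpow A (i - (N - j)) *v (B *v input_part y i)"
  have "{i \<in> {..<N}. N - j \<le> i} = {N - j..<N}" by auto
  then have "(\<Sum>i<N. if N - j \<le> i then ?v i else 0) = (\<Sum>i\<in>{N - j..<N}. ?v i)"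
    by (simp flip: sum.inter_filter)
  also have "\<dots> = (\<Sum>k<j. ?v (k + (N - j)))"
    using sum.shift_bounds_nat_ivl[of ?v 0 "N - j" j] assms by (simp add: atLeast0LessThan)
  also have "\<dots> = (\<Sum>l<j. ?v (j - Suc l + (N - j)))"
    by (rule sum.nat_diff_reindex[symmetric])
  also have "\<dots> = (\<Sum>l<j. mpow A (j - Suc l) *v (B *v input_seq N y l))"
    using assms by (intro sum.cong) (auto simp: input_seq_def)
  finally show ?thesis
    by (simp add: traj_closed_form)
qed

lemma Gbar_FR_row:
  assumes "j \<le> N"
  shows "(\<Sum>\<kappa>\<in>Cols N. Gbar N A B H F G (FR j r) \<kappa> * y \<kappa>)
    = (F *v traj A B (state_part y) (input_seq N y) j) $ r"
proof -
  have "Gbar N A B H F G (FR j r) = (\<lambda>\<kappa>. case \<kappa> of SC c \<Rightarrow> (F ** mpow A j) $ r $ c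
      | IC i a \<Rightarrow> (if N - j \<le> i then F ** mpow A (i - (N - j)) ** B else 0) $ r $ a)"
    by (auto simp: Gbar_def fun_eq_iff split: cidx.split)
  then show ?thesis
    using assms
    by (simp add: sum_Cols_block_row traj_input_seq linear_sum[OF matrix_vector_mul_linear]
        matrix_vector_right_distrib if_distrib[of "\<lambda>M. M *v _"] if_distrib[of "(*v) F"]
        matrix_vector_mul_assoc matrix_mul_assoc cong: if_cong)
qed

lemma Gbar_HR_row:
  "(\<Sum>\<kappa>\<in>Cols N. Gbar N A B H F G (HR r) \<kappa> * y \<kappa>)
    = (H *v traj A B (state_part y) (input_seq N y) N) $ r"
proof -
  have "Gbar N A B H F G (HR r) = (\<lambda>\<kappa>. case \<kappa> of SC c \<Rightarrow> (H ** mpow A N) $ r $ c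
      | IC i a \<Rightarrow> (H ** mpow A i ** B) $ r $ a)"
    by (auto simp: Gbar_def fun_eq_iff split: cidx.split)
  then show ?thesis
    by (simp add: sum_Cols_block_row traj_input_seq linear_sum[OF matrix_vector_mul_linear]
        matrix_vector_right_distrib matrix_vector_mul_assoc matrix_mul_assoc)
qed

lemma Gbar_GR_row:
  assumes "i < N"
  shows "(\<Sum>\<kappa>\<in>Cols N. Gbar N A B H F G (GR i r) \<kappa> * y \<kappa>) = (G *v input_part y i) $ r"
proof -
  have "Gbar N A B H F G (GR i r) = (\<lambda>\<kappa>. case \<kappa> of SC c \<Rightarrow> (0 :: real^_^_) $ r $ c
      | IC i' a \<Rightarrow> (if i' = i then G else 0) $ r $ a)"
    by (auto simp: Gbar_def fun_eq_iff split: cidx.split)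
  then show ?thesis
    using assms by (simp add: sum_Cols_block_row if_distrib[of "\<lambda>M. M *v _"] cong: if_cong)
qed

lemma state_part_in_Qk:
  assumes feasible: "\<And>\<rho>. \<rho> \<in> Rows N \<Longrightarrow> (\<Sum>\<kappa>\<in>Cols N. Gbar N A B H F G \<rho> \<kappa> * y \<kappa>) \<le> gbar h g f \<rho>"
  shows "state_part y \<in> Qk A B (hpolyhedron H h) (hpolyhedron G g) (hpolyhedron F f) N"
proof -
  let ?x = "state_part y" and ?w = "input_seq N y"
  have in_X: "traj A B ?x ?w j \<in> hpolyhedron F f" if "j \<le> N" for j
  proof -
    have "(F *v traj A B ?x ?w j) $ r \<le> f $ r" for r
      using feasible[of "FR j r"] that by (simp add: Rows_def gbar_def Gbar_FR_row)
    then show ?thesis by (simp add: hpolyhedron_def)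
  qed
  have in_U: "?w l \<in> hpolyhedron G g" if "l < N" for l
  proof -
    have "(G *v ?w l) $ r \<le> g $ r" for r
      using feasible[of "GR (N - Suc l) r"] that
      by (simp add: Rows_def gbar_def Gbar_GR_row input_seq_def)
    then show ?thesis by (simp add: hpolyhedron_def)
  qed
  have in_Omega: "traj A B ?x ?w N \<in> hpolyhedron H h"
  proof -
    have "(H *v traj A B ?x ?w N) $ r \<le> h $ r" for r
      using feasible[of "HR r"] by (simp add: Rows_def gbar_def Gbar_HR_row)
    then show ?thesis by (simp add: hpolyhedron_def)
  qed
  show ?thesis
    unfolding Qk_def using in_X[of 0] in_X in_U in_Omega by (auto intro!: exI[of _ ?w])
qed

(* M applied to the lifted point (x, 0, ..., 0). *)
definition lift_state ::
  "(('n, 'm) cidx \<Rightarrow> ('n, 'm) cidx \<Rightarrow> real) \<Rightarrow> real^'n \<Rightarrow> ('n::finite, 'm) cidx \<Rightarrow> real" where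
  "lift_state M x \<kappa> = (\<Sum>c\<in>UNIV. M \<kappa> (SC c) * x $ c)"

lemma state_part_lift_state:
  assumes "\<forall>c. \<forall>\<kappa>\<in>Cols N. Ibar c \<kappa> = (\<Sum>\<kappa>'\<in>Cols N. Ibar c \<kappa>' * M \<kappa>' \<kappa>)"
  shows "state_part (lift_state M x :: ('n::finite, 'm::finite) cidx \<Rightarrow> real) = x"
proof -
  have "Ibar c (SC c' :: ('n, 'm) cidx) = (\<Sum>\<kappa>\<in>Cols N. Ibar c \<kappa> * M \<kappa> (SC c'))" for c c'
    by (rule assms[rule_format, OF SC_in_Cols])
  then have "M (SC c) (SC c') = Ibar c (SC c' :: ('n, 'm) cidx)" for c c'
    by (simp add: Ibar_def if_distrib[of "\<lambda>t. t * _"] finite_Cols cong: if_cong)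
  then show ?thesis
    by (simp add: vec_eq_iff state_part_def lift_state_def Ibar_def if_distrib[of "\<lambda>t. t * _"] cong: if_cong)
qed

lemma lift_state_row_bound:
  fixes t :: "'h::finite \<Rightarrow> real" and H :: "real^'n::finite^'h"
    and k :: "('n, 'm::finite) cidx \<Rightarrow> real"
  assumes "x \<in> hpolyhedron H h" and t_nonneg: "\<forall>r. t r \<ge> 0"
    and factor: "\<forall>c. (\<Sum>r\<in>UNIV. t r * H $ r $ c) = (\<Sum>\<kappa>\<in>Cols N. k \<kappa> * M \<kappa> (SC c))"
    and bound: "(\<Sum>r\<in>UNIV. t r * h $ r) \<le> b"
  shows "(\<Sum>\<kappa>\<in>Cols N. k \<kappa> * lift_state M x \<kappa>) \<le> b"
proof -
  have "(\<Sum>\<kappa>\<in>Cols N. k \<kappa> * lift_state M x \<kappa>) = (\<Sum>c\<in>UNIV. (\<Sum>\<kappa>\<in>Cols N. k \<kappa> * M \<kappa> (SC c)) * x $ c)"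
    unfolding lift_state_def sum_distrib_left sum_distrib_right mult.assoc by (rule sum.swap)
  also have "\<dots> = (\<Sum>c\<in>UNIV. \<Sum>r\<in>UNIV. t r * (H $ r $ c * x $ c))"
    by (simp add: factor[rule_format, symmetric] sum_distrib_right mult.assoc)
  also have "\<dots> = (\<Sum>r\<in>UNIV. t r * (H *v x) $ r)"
    by (subst sum.swap) (simp add: matrix_vector_mult_def sum_distrib_left)
  also have "\<dots> \<le> (\<Sum>r\<in>UNIV. t r * h $ r)"
    using assms(1) t_nonneg by (intro sum_mono mult_left_mono) (auto simp: hpolyhedron_def)
  finally show ?thesis using bound by linarith
qed

lemma hpolyhedron_subset_Qk:
  fixes A :: "real^'n::finite^'n" and B :: "real^'m::finite^'n" and H :: "real^'n^'h::finite"
    and M :: "('n, 'm) cidx \<Rightarrow> ('n, 'm) cidx \<Rightarrow> real"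
  assumes Tnonneg: "\<forall>\<rho>\<in>Rows N. \<forall>r. T \<rho> r \<ge> 0"
    and THGM: "\<forall>\<rho>\<in>Rows N. \<forall>\<kappa>\<in>Cols N.
                 (\<Sum>r\<in>UNIV. T \<rho> r * Hbar H r \<kappa>) = (\<Sum>\<kappa>'\<in>Cols N. Gbar N A B H F G \<rho> \<kappa>' * M \<kappa>' \<kappa>)"
    and Th: "\<forall>\<rho>\<in>Rows N. (\<Sum>r\<in>UNIV. T \<rho> r * h $ r) \<le> gbar h g f \<rho>"
    and IM: "\<forall>c. \<forall>\<kappa>\<in>Cols N. Ibar c \<kappa> = (\<Sum>\<kappa>'\<in>Cols N. Ibar c \<kappa>' * M \<kappa>' \<kappa>)"
  shows "hpolyhedron H h \<subseteq> Qk A B (hpolyhedron H h) (hpolyhedron G g) (hpolyhedron F f) N"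
proof
  fix x :: "real^'n" assume x: "x \<in> hpolyhedron H h"
  have "(\<Sum>\<kappa>\<in>Cols N. Gbar N A B H F G \<rho> \<kappa> * lift_state M x \<kappa>) \<le> gbar h g f \<rho>"
    if "\<rho> \<in> Rows N" for \<rho>
  proof (rule lift_state_row_bound[OF x])
    show "\<forall>r. T \<rho> r \<ge> 0" using Tnonneg that by blast
    show "\<forall>c. (\<Sum>r\<in>UNIV. T \<rho> r * H $ r $ c) = (\<Sum>\<kappa>\<in>Cols N. Gbar N A B H F G \<rho> \<kappa> * M \<kappa> (SC c))"
      using THGM[rule_format, OF that SC_in_Cols] by (simp add: Hbar_def)
    show "(\<Sum>r\<in>UNIV. T \<rho> r * h $ r) \<le> gbar h g f \<rho>" using Th that by blast
  qed
  then have "state_part (lift_state M x) \<in> Qk A B (hpolyhedron H h) (hpolyhedron G g) (hpolyhedron F f) N"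
    by (rule state_part_in_Qk)
  then show "x \<in> Qk A B (hpolyhedron H h) (hpolyhedron G g) (hpolyhedron F f) N"
    using state_part_lift_state[OF IM] by simp
qed

theorem theorem2:
  fixes A :: "real^'n^'n" and B :: "real^'m^'n"
    and H :: "real^'n^'h" and h :: "real^'h"
    and F :: "real^'n^'f" and f :: "real^'f"
    and G :: "real^'m^'g" and g :: "real^'g"
    and N :: nat
    and T :: "('h, 'g, 'f) ridx \<Rightarrow> 'h \<Rightarrow> real"
    and M :: "('n, 'm) cidx \<Rightarrow> ('n, 'm) cidx \<Rightarrow> real"
  defines "Omega \<equiv> {x. \<forall>i. (H *v x) $ i \<le> h $ i}"
    and "X \<equiv> {y. \<forall>i. (F *v y) $ i \<le> f $ i}"
    and "U \<equiv> {v. \<forall>i. (G *v v) $ i \<le> g $ i}"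
  assumes N: "N \<ge> 1"
    and O0: "0 \<in> Omega" and X0: "0 \<in> X" and U0: "0 \<in> U"
    and Tnonneg: "\<forall>\<rho>\<in>Rows N. \<forall>r. T \<rho> r \<ge> 0"
    and THGM: "\<forall>\<rho>\<in>Rows N. \<forall>\<kappa>\<in>Cols N.
                 (\<Sum>r\<in>UNIV. T \<rho> r * Hbar H r \<kappa>) = (\<Sum>\<kappa>'\<in>Cols N. Gbar N A B H F G \<rho> \<kappa>' * M \<kappa>' \<kappa>)"
    and Th: "\<forall>\<rho>\<in>Rows N. (\<Sum>r\<in>UNIV. T \<rho> r * h $ r) \<le> gbar h g f \<rho>"
    and IM: "\<forall>c. \<forall>\<kappa>\<in>Cols N. Ibar c \<kappa> = (\<Sum>\<kappa>'\<in>Cols N. Ibar c \<kappa>' * M \<kappa>' \<kappa>)"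
  shows "control_invariant A B U (Qbar A B Omega U X N) \<and> Qbar A B Omega U X N \<subseteq> X"
proof -
  have sets: "Omega = hpolyhedron H h" "U = hpolyhedron G g" "X = hpolyhedron F f"
    by (simp_all add: Omega_def U_def X_def hpolyhedron_def)
  have "Omega \<subseteq> Qk A B Omega U X N"
    using hpolyhedron_subset_Qk[OF Tnonneg THGM Th IM] by (simp add: sets)
  then have "control_invariant A B U (\<Union>k\<in>{1..N}. Qk A B Omega U X k)"
    by (rule control_invariant_Union_Qk)
  then have "control_invariant A B U (Qbar A B Omega U X N)"
    unfolding Qbar_def by (rule control_invariant_convex_hull) (simp add: sets convex_hpolyhedron)
  moreover have "Qbar A B Omega U X N \<subseteq> X"
    by (rule Qbar_subset) (simp add: sets convex_hpolyhedron)
  ultimately show ?thesis ..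
qed

end
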